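(* Let $f(x)=\dfrac{1}{x^2-1}$, viewed as a map on $\mathbb{C}\setminus\{-1,1\}$, and consider the difference equation $x_{n+1}=f(x_n)$ over $\mathbb{C}$. Define, for $x\in\mathbb{C}\setminus\{0\}$, $$h_+(x)=\sqrt{\tfrac1x+1},\qquad h_-(x)=-\sqrt{\tfrac1x+1},$$ where $\sqrt{\cdot}$ denotes the principal branch of the complex square root. For $n\geq1$ and letters $a_1,\ldots,a_n\in\{h_+,h_-\}$, write $a_1\ldots a_n$ for the number $a_1\circ a_2\circ\cdots\circ a_n(1)$. Then: (i) the unique point $x\in\mathbb{C}$ with $f(x)=-1$ is $x=0$, and $0$ has no preimage under $f$; (ii) the points $x$ with $f^m(x)=1$ for some $m\geq1$ (all intermediate iterates being defined) are exactly the numbers $a_1\ldots a_n$ with $n\geq1$ and $a_i\in\{h_+,h_-\}$; (iii) every such word $a_1\ldots a_n$ is well defined in $\mathbb{C}$, that is, all the intermediate compositions are nonzero, and in particular $a_1\ldots a_n\neq0$; (iv) the representation is unique: if $a_1\ldots a_n=b_1\ldots b_m$ with all $a_i,b_j\in\{h_+,h_-\}$, then $n=m$ and $a_i=b_i$ for $i=1,\ldots,n$. Consequently the forbidden set of the equation over $\mathbb{C}$ is $$\mathcal F=\{-1,0,1\}\cup\{a_1\ldots a_n:\ n\in\mathbb{N},\ n\geq1,\ a_i\in\{h_+,h_-\}\}.$$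
   Context: For the difference equation $x_{n+1}=f(x_n)$ with $f$ defined on $A=\mathbb{C}\setminus\{-1,1\}$ (the poles of $f$ being $\pm1$), the forbidden set $\mathcal F$ is the set of initial conditions $x_0\in\mathbb{C}$ for which some iterate $x_n$ ($n\geq0$) of the recursion lands on a pole $\pm1$, so that $x_{n+1}$ is not defined; it includes the poles themselves. The principal square root of $w\neq0$ is the square root with argument in $(-\pi/2,\pi/2]$, and $\sqrt0=0$. *)

theory Defs
  imports Complex_Main
begin

definition fmap :: "complex \<Rightarrow> complex" where
  "fmap x = 1 / (x\<^sup>2 - 1)"

definition poles :: "complex set" where
  "poles = {-1, 1}"

definition forbidden_set :: "complex set" where
  "forbidden_set = {x. \<exists>n. (fmap ^^ n) x \<in> poles \<and> (\<forall>k<n. (fmap ^^ k) x \<notin> poles)}"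

text \<open>Letters: True encodes h_+, False encodes h_-. csqrt is the principal square root.\<close>
definition hmap :: "bool \<Rightarrow> complex \<Rightarrow> complex" where
  "hmap b x = (if b then 1 else -1) * csqrt (1 / x + 1)"

definition word_val :: "bool list \<Rightarrow> complex" where
  "word_val ws = foldr hmap ws 1"

text \<open>A word is well defined if every letter is applied to a nonzero argument,
  i.e. all intermediate compositions a_{k+1} \<circ> ... \<circ> a_n (1) are nonzero.\<close>
definition word_wd :: "bool list \<Rightarrow> bool" where
  "word_wd ws = (\<forall>k<length ws. word_val (drop (Suc k) ws) \<noteq> 0)"

end

theory Submission
  imports Defs
begin

text \<open>The letters h_+ and h_- are the two inverse branches of f: f(h(y)) = y, and every
  preimage of y off the poles is h_+(y) or h_-(y). Hence the points reaching 1 are exactly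
  the words. Since h(y) = 0 only for y = -1 and h(y) = -1 only for y = 0, induction shows
  that no word is 0 or -1; no word is 1 either, because f(1) = 0 would then be a word.
  So the iterates of a word avoid the poles until they reach 1, and applying f peels off
  letters one at a time, which together with h_+(y) = -h_-(y) \<noteq> 0 gives uniqueness.
  The only other way to reach a pole is to reach -1, whose sole preimage 0 has none.\<close>

lemma hmap_squared: "(hmap b y)\<^sup>2 = 1 / y + 1"
  by (simp add: hmap_def power_mult_distrib)

lemma fmap_hmap: "fmap (hmap b y) = y"
  by (simp add: fmap_def hmap_squared)

lemma word_val_Nil: "word_val [] = 1"
  by (simp add: word_val_def)

lemma word_val_Cons: "word_val (b # ws) = hmap b (word_val ws)"
  by (simp add: word_val_def)

lemma hmap_eq_0_iff: "hmap b y = 0 \<longleftrightarrow> y = -1"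
proof -
  have "hmap b y = 0 \<longleftrightarrow> (hmap b y)\<^sup>2 = 0" by simp
  also have "\<dots> \<longleftrightarrow> 1 / y + 1 = 0" by (simp add: hmap_squared)
  also have "\<dots> \<longleftrightarrow> y = -1"
    by (cases "y = 0") (auto simp: field_simps add_eq_0_iff)
  finally show ?thesis .
qed

lemma hmap_eq_neg1_imp: "hmap b y = -1 \<Longrightarrow> y = 0"
  using hmap_squared[of b y] by simp

lemma word_val_ne_0_neg1: "word_val ws \<noteq> 0 \<and> word_val ws \<noteq> -1"
  by (induction ws) (auto simp: word_val_Nil word_val_Cons hmap_eq_0_iff dest: hmap_eq_neg1_imp)

lemma word_val_ne_1: "ws \<noteq> [] \<Longrightarrow> word_val ws \<noteq> 1"
proof
  assume "ws \<noteq> []" "word_val ws = 1"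
  then obtain b vs where ws: "ws = b # vs" by (cases ws) auto
  have "word_val vs = fmap (word_val ws)" by (simp add: ws word_val_Cons fmap_hmap)
  also have "\<dots> = 0" using \<open>word_val ws = 1\<close> by (simp add: fmap_def)
  finally show False using word_val_ne_0_neg1 by blast
qed

lemma word_val_notin_poles: "ws \<noteq> [] \<Longrightarrow> word_val ws \<notin> poles"
  using word_val_ne_1 word_val_ne_0_neg1 by (auto simp: poles_def)

lemma funpow_fmap_word_val:
  "k \<le> length ws \<Longrightarrow> (fmap ^^ k) (word_val ws) = word_val (drop k ws)"
proof (induction k arbitrary: ws)
  case 0
  then show ?case by simp
next
  case (Suc k)
  then obtain b vs where ws: "ws = b # vs" by (cases ws) auto
  have "(fmap ^^ Suc k) (word_val ws) = (fmap ^^ k) (word_val vs)"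
    by (simp add: funpow_swap1 ws word_val_Cons fmap_hmap)
  also have "\<dots> = word_val (drop k vs)" using Suc ws by simp
  finally show ?case by (simp add: ws)
qed

lemma fmap_preimage_is_hmap:
  assumes "x \<notin> poles" "fmap x = y"
  shows "\<exists>b. x = hmap b y"
proof -
  have "x\<^sup>2 \<noteq> 1" using assms(1) by (auto simp: poles_def power2_eq_1_iff)
  moreover have "y = 1 / (x\<^sup>2 - 1)" using assms(2) by (simp add: fmap_def)
  ultimately have "x\<^sup>2 = 1 / y + 1" by simp
  then have "x = csqrt (1 / y + 1) \<or> x = - csqrt (1 / y + 1)"
    using power2_eq_iff[of x "csqrt (1 / y + 1)"] by simp
  then show ?thesis unfolding hmap_def by (metis mult_1 mult_minus1)
qed

lemma fmap_preimage_neg1: "{x. x \<notin> poles \<and> fmap x = -1} = {0}"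
proof -
  have "x = 0" if "x \<notin> poles" "fmap x = -1" for x
    using fmap_preimage_is_hmap[OF that] hmap_eq_0_iff by auto
  moreover have "(0::complex) \<notin> poles" "fmap 0 = -1" by (simp_all add: poles_def fmap_def)
  ultimately show ?thesis by blast
qed

lemma fmap_no_preimage_0: "\<not> (\<exists>x. x \<notin> poles \<and> fmap x = 0)"
proof
  assume "\<exists>x. x \<notin> poles \<and> fmap x = 0"
  then obtain x b where "x \<notin> poles" "x = hmap b 0" using fmap_preimage_is_hmap by blast
  moreover have "hmap b 0 \<in> poles" by (cases b) (auto simp: hmap_def poles_def)
  ultimately show False by simp
qed

lemma reaches_1_imp_word_val:
  assumes "m \<ge> 1" "(fmap ^^ m) x = 1" "\<forall>k<m. (fmap ^^ k) x \<notin> poles"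
  shows "\<exists>ws. length ws = m \<and> x = word_val ws"
  using assms
proof (induction m arbitrary: x rule: nat_induct_at_least)
  case base
  then obtain b where "x = hmap b 1" using fmap_preimage_is_hmap by fastforce
  then show ?case by (intro exI[of _ "[b]"]) (simp add: word_val_Cons word_val_Nil)
next
  case (Suc m)
  have "(fmap ^^ m) (fmap x) = 1" "\<forall>k<m. (fmap ^^ k) (fmap x) \<notin> poles"
    using Suc.prems by (simp_all add: funpow_swap1) (metis Suc_mono funpow_simps_right(2) o_apply)
  then obtain ws where ws: "length ws = m" "fmap x = word_val ws" using Suc.IH by blast
  have "x \<notin> poles" using Suc.prems(2) by (metis funpow_0 zero_less_Suc)
  then obtain b where "x = hmap b (word_val ws)" using fmap_preimage_is_hmap ws(2) by blast
  then show ?case using ws(1) by (intro exI[of _ "b # ws"]) (simp add: word_val_Cons)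
qed

lemma word_val_reaches_1:
  assumes "ws \<noteq> []"
  shows "(fmap ^^ length ws) (word_val ws) = 1"
    and "\<forall>k<length ws. (fmap ^^ k) (word_val ws) \<notin> poles"
  using assms funpow_fmap_word_val word_val_notin_poles by (simp_all add: word_val_Nil)

lemma reaches_1_iff_word_val:
  "{x. \<exists>m\<ge>1. (fmap ^^ m) x = 1 \<and> (\<forall>k<m. (fmap ^^ k) x \<notin> poles)}
     = {word_val ws | ws. ws \<noteq> []}"
proof (intro equalityI subsetI)
  fix x assume "x \<in> {x. \<exists>m\<ge>1. (fmap ^^ m) x = 1 \<and> (\<forall>k<m. (fmap ^^ k) x \<notin> poles)}"
  then obtain m ws where "m \<ge> 1" "length ws = m" "x = word_val ws"
    using reaches_1_imp_word_val by blast
  then show "x \<in> {word_val ws | ws. ws \<noteq> []}" by auto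
next
  fix x assume "x \<in> {word_val ws | ws. ws \<noteq> []}"
  then obtain ws where "ws \<noteq> []" "x = word_val ws" by blast
  then show "x \<in> {x. \<exists>m\<ge>1. (fmap ^^ m) x = 1 \<and> (\<forall>k<m. (fmap ^^ k) x \<notin> poles)}"
    using word_val_reaches_1 by (auto intro!: exI[of _ "length ws"] simp: Suc_le_eq)
qed

lemma word_val_inj: "word_val ws = word_val vs \<Longrightarrow> ws = vs"
proof (induction ws arbitrary: vs)
  case Nil
  then show ?case using word_val_ne_1 by (metis word_val_Nil)
next
  case (Cons a ws)
  then obtain b vs' where vs: "vs = b # vs'"
    using word_val_ne_1[of "a # ws"] by (cases vs) (auto simp: word_val_Nil)
  have "word_val ws = word_val vs'"
    using Cons.prems vs fmap_hmap word_val_Cons by metis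
  then have tl: "ws = vs'" using Cons.IH by blast
  have "a = b"
  proof (rule ccontr)
    assume "a \<noteq> b"
    then have "hmap a (word_val ws) = - hmap b (word_val ws)" by (cases a) (auto simp: hmap_def)
    moreover have "hmap a (word_val ws) = hmap b (word_val ws)"
      using Cons.prems vs tl by (simp add: word_val_Cons)
    ultimately have "hmap a (word_val ws) = 0" by simp
    then show False using hmap_eq_0_iff word_val_ne_0_neg1 by blast
  qed
  then show ?case using tl vs by simp
qed

lemma reaches_neg1_imp:
  assumes "(fmap ^^ n) x = -1" "\<forall>k<n. (fmap ^^ k) x \<notin> poles"
  shows "x = -1 \<or> x = 0"
proof (cases n)
  case (Suc m)
  then have "(fmap ^^ m) x \<notin> poles" "fmap ((fmap ^^ m) x) = -1" using assms by auto
  then have zero: "(fmap ^^ m) x = 0" using fmap_preimage_neg1 by blast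
  show ?thesis
  proof (cases m)
    case (Suc j)
    then have "(fmap ^^ j) x \<notin> poles" "fmap ((fmap ^^ j) x) = 0"
      using assms \<open>n = Suc m\<close> zero by auto
    then show ?thesis using fmap_no_preimage_0 by blast
  qed (use zero in simp)
qed (use assms in simp)

lemma forbidden_set_eq: "forbidden_set = {-1, 0, 1} \<union> {word_val ws | ws. ws \<noteq> []}"
proof (intro equalityI subsetI)
  fix x assume "x \<in> forbidden_set"
  then obtain n where pole: "(fmap ^^ n) x = 1 \<or> (fmap ^^ n) x = -1"
    and defined: "\<forall>k<n. (fmap ^^ k) x \<notin> poles"
    unfolding forbidden_set_def poles_def by blast
  consider "(fmap ^^ n) x = -1" | "(fmap ^^ n) x = 1" "n = 0" | "(fmap ^^ n) x = 1" "n \<ge> 1"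
    using pole by linarith
  then show "x \<in> {-1, 0, 1} \<union> {word_val ws | ws. ws \<noteq> []}"
  proof cases
    case 1
    then show ?thesis using reaches_neg1_imp defined by blast
  next
    case 2
    then show ?thesis by simp
  next
    case 3
    then show ?thesis using defined reaches_1_iff_word_val by blast
  qed
next
  fix x assume "x \<in> {-1, 0, 1} \<union> {word_val ws | ws. ws \<noteq> []}"
  then consider "x \<in> poles" | "x = 0" | ws where "ws \<noteq> []" "x = word_val ws"
    unfolding poles_def by blast
  then show "x \<in> forbidden_set"
  proof cases
    case 1
    then show ?thesis unfolding forbidden_set_def by (intro CollectI exI[of _ 0]) simp
  next
    case 2
    have "(0::complex) \<notin> poles" "fmap 0 \<in> poles" by (simp_all add: poles_def fmap_def)
    then show ?thesis unfolding forbidden_set_def 2 by (intro CollectI exI[of _ 1]) simp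
  next
    case (3 ws)
    then show ?thesis unfolding forbidden_set_def
      using word_val_reaches_1[of ws] by (intro CollectI exI[of _ "length ws"]) (simp add: poles_def)
  qed
qed

theorem mainTheorem1:
  shows "{x. x \<notin> poles \<and> fmap x = -1} = {0}
    \<and> \<not> (\<exists>x. x \<notin> poles \<and> fmap x = 0)
    \<and> {x. \<exists>m\<ge>1. (fmap ^^ m) x = 1 \<and> (\<forall>k<m. (fmap ^^ k) x \<notin> poles)}
        = {word_val ws | ws. ws \<noteq> []}
    \<and> (\<forall>ws. ws \<noteq> [] \<longrightarrow> word_wd ws \<and> word_val ws \<noteq> 0)
    \<and> (\<forall>ws vs. ws \<noteq> [] \<longrightarrow> vs \<noteq> [] \<longrightarrow> word_val ws = word_val vs
          \<longrightarrow> length ws = length vs \<and> (\<forall>i<length ws. ws ! i = vs ! i))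
    \<and> forbidden_set = {-1, 0, 1} \<union> {word_val ws | ws. ws \<noteq> []}"
proof -
  have "word_wd ws" for ws
    using word_val_ne_0_neg1 by (simp add: word_wd_def)
  then show ?thesis
    using fmap_preimage_neg1 fmap_no_preimage_0 reaches_1_iff_word_val
      word_val_ne_0_neg1 word_val_inj forbidden_set_eq
    by blast
qed

end
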